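(* Let $\alpha=(a_1,\dots,a_w)$ have $m$ nonempty horizontal lists. (1) Let $a_i,a_j\in\mathbb{L}^t_\alpha$ with $a_i<a_j$. Then for every $1\le k<t$, the items $lm^k_\alpha(a_i)$, $lm^k_\alpha(a_j)$, $un^k_\alpha(a_i)$ and $un^k_\alpha(a_j)$ all lie in $\mathbb{L}^{t-k}_\alpha$. Moreover, $lm^k_\alpha(a_i)\le lm^k_\alpha(a_j)$ and $un^k_\alpha(a_i)\le un^k_\alpha(a_j)$ as values. (2) Let $a_i\in\mathbb{L}^t_\alpha$, and let $\beta=(a_{i_{t-1}},\dots,a_{i_1},a_{i_0})$, with $a_{i_0}=a_i$, be any increasing subsequence of $\alpha$ of length $t$ ending at $a_i$. Then for every $0\le k\le t-1$, the items $lm^k_\alpha(a_i)$, $a_{i_k}$ and $un^k_\alpha(a_i)$ lie in $\mathbb{L}^{t-k}_\alpha$, and $lm^k_\alpha(a_i)\ge a_{i_k}\ge un^k_\alpha(a_i)$. (3) Let $a_i\in\mathbb{L}^m_\alpha$. Among all longest increasing subsequences of $\alpha$ ending at $a_i$, the sequence $(lm^{m-1}_\alpha(a_i),\dots,lm^0_\alpha(a_i))$ has maximum weight and minimum gap. The sequence $(un^{m-1}_\alpha(a_i),\dots,un^0_\alpha(a_i))$ has minimum weight and maximum gap. (4) Let $a^m_h$ and $a^m_t$ be the first and last items of $\mathbb{L}^m_\alpha$. Then $(lm^{m-1}_\alpha(a^m_h),\dots,lm^0_\alpha(a^m_h))$ is a longest increasing subsequence of $\alpha$ of maximum weight. Also,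 $(un^{m-1}_\alpha(a^m_t),\dots,un^0_\alpha(a^m_t))$ is a longest increasing subsequence of $\alpha$ of minimum weight.
   Context: Let $\alpha=(a_1,\dots,a_w)$ be a finite sequence of real numbers, with items identified by their positions. Increasing subsequences are non-strict: indices strictly increase and values satisfy $\le$. $a_j$ is compatible with $a_i$ if $j<i$ and $a_j\le a_i$. $RL_\alpha(a)$ is the maximum length of an increasing subsequence ending at $a$. $a_j$ is a predecessor of $a_i$ if it is compatible with $a_i$ and $RL_\alpha(a_j)=RL_\alpha(a_i)-1$. The horizontal list $\mathbb{L}^t_\alpha$ is the list of items of rising length $t$, ordered by position; $m$ is the number of nonempty lists, which equals the length of a longest increasing subsequence. The up neighbor $un_\alpha(a_i)$ is the item $a_j$ with the largest $j<i$ and $RL_\alpha(a_j)=RL_\alpha(a_i)-1$. The leftmost child $lm_\alpha(a_i)$ is the predecessor of $a_i$ with smallest position. Further, $un^0_\alpha(a)=lm^0_\alpha(a)=a$, $un^k_\alpha=un_\alpha\circ un^{k-1}_\alpha$, and $lm^k_\alpha=lm_\alpha\circ lm^{k-1}_\alpha$. For an increasing subsequence $s$, its weight is the sum of its items, and its gap is (last item) $-$ (first item). *)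

theory Defs
  imports Complex_Main
begin

(* The sequence alpha = (a_1,...,a_w) is a list xs :: real list; items are
   identified by their positions, here 0-based indices 0..<length xs.
   An increasing subsequence is represented by its list of positions. *)

definition is_inc :: "real list \<Rightarrow> nat list \<Rightarrow> bool" where
  "is_inc xs ps \<longleftrightarrow> sorted_wrt (<) ps \<and> (\<forall>p\<in>set ps. p < length xs)
     \<and> sorted (map (\<lambda>p. xs ! p) ps)"

definition is_lis :: "real list \<Rightarrow> nat list \<Rightarrow> bool" where
  "is_lis xs ps \<longleftrightarrow> is_inc xs ps \<and> (\<forall>qs. is_inc xs qs \<longrightarrow> length qs \<le> length ps)"

definition RL :: "real list \<Rightarrow> nat \<Rightarrow> nat" where
  "RL xs i = Max {length ps | ps. is_inc xs ps \<and> ps \<noteq> [] \<and> last ps = i}"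

definition compatible :: "real list \<Rightarrow> nat \<Rightarrow> nat \<Rightarrow> bool" where
  "compatible xs j i \<longleftrightarrow> j < i \<and> xs ! j \<le> xs ! i"

definition pred :: "real list \<Rightarrow> nat \<Rightarrow> nat \<Rightarrow> bool" where
  "pred xs j i \<longleftrightarrow> compatible xs j i \<and> RL xs j = RL xs i - 1"

(* horizontal list L^t_alpha, as the set of positions (ordered by position) *)
definition HL :: "real list \<Rightarrow> nat \<Rightarrow> nat set" where
  "HL xs t = {i. i < length xs \<and> RL xs i = t}"

definition num_lists :: "real list \<Rightarrow> nat" where
  "num_lists xs = card {t. HL xs t \<noteq> {}}"

definition un :: "real list \<Rightarrow> nat \<Rightarrow> nat" where
  "un xs i = (GREATEST j. j < i \<and> RL xs j = RL xs i - 1)"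

definition lm :: "real list \<Rightarrow> nat \<Rightarrow> nat" where
  "lm xs i = (LEAST j. pred xs j i)"

definition chain :: "(nat \<Rightarrow> nat) \<Rightarrow> nat \<Rightarrow> nat \<Rightarrow> nat list" where
  "chain f n i = map (\<lambda>k. (f ^^ (n - 1 - k)) i) [0..<n]"

definition weight :: "real list \<Rightarrow> nat list \<Rightarrow> real" where
  "weight xs ps = sum_list (map (\<lambda>p. xs ! p) ps)"

definition gap :: "real list \<Rightarrow> nat list \<Rightarrow> real" where
  "gap xs ps = xs ! (last ps) - xs ! (hd ps)"

end

theory Submission
  imports Defs
begin

(*
  Items of one horizontal list strictly decrease in value from left to right, since an item
  compatible with a later item of the same list would raise that item's rising length.
  All predecessors of an item lie in the previous list, so lm picks the predecessor of
  largest value and un (the nearest item of that list to its left, itself a predecessor) the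
  one of smallest value; both maps are monotone on each list. Along an increasing
  subsequence of length t ending at a_i, the item k steps from the end lies in L^(t-k),
  and induction on k squeezes it between un^k(a_i) and lm^k(a_i); weights and gaps are
  then compared pointwise. Every longest increasing subsequence ends in L^m, whose first
  item has the largest and last item the smallest value, and monotonicity carries this
  comparison down the chains.
*)

section \<open>Increasing subsequences and rising length\<close>

lemma is_inc_nth_less: "is_inc xs ps \<Longrightarrow> r < s \<Longrightarrow> s < length ps \<Longrightarrow> ps ! r < ps ! s"
  by (simp add: is_inc_def sorted_wrt_iff_nth_less)

lemma is_inc_nth_mono: "is_inc xs ps \<Longrightarrow> r \<le> s \<Longrightarrow> s < length ps \<Longrightarrow> xs ! (ps ! r) \<le> xs ! (ps ! s)"
  unfolding is_inc_def using sorted_nth_mono[of "map ((!) xs) ps" r s] by simp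

lemma is_inc_nth_bound: "is_inc xs ps \<Longrightarrow> r < length ps \<Longrightarrow> ps ! r < length xs"
  by (simp add: is_inc_def)

lemma is_inc_last_bound: "is_inc xs ps \<Longrightarrow> ps \<noteq> [] \<Longrightarrow> last ps < length xs"
  by (simp add: is_inc_def)

lemma is_inc_length_le:
  assumes "is_inc xs ps"
  shows "length ps \<le> length xs"
proof -
  have "length ps = card (set ps)"
    using assms by (simp add: is_inc_def strict_sorted_iff distinct_card)
  also have "\<dots> \<le> card {..<length xs}"
    using assms by (intro card_mono) (auto simp: is_inc_def)
  finally show ?thesis by simp
qed

lemma is_inc_take: "is_inc xs ps \<Longrightarrow> is_inc xs (take k ps)"
  unfolding is_inc_def by (auto simp: sorted_wrt_take take_map[symmetric] dest: in_set_takeD)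

lemma is_inc_singleton: "i < length xs \<Longrightarrow> is_inc xs [i]"
  by (simp add: is_inc_def)

lemma is_inc_le_last:
  assumes "is_inc xs ps" "p \<in> set ps"
  shows "p \<le> last ps \<and> xs ! p \<le> xs ! last ps"
proof -
  obtain r where r: "r < length ps" "p = ps ! r"
    using assms(2) by (auto simp: in_set_conv_nth)
  then have last: "last ps = ps ! (length ps - 1)"
    by (cases ps) (simp_all add: last_conv_nth)
  have "r < length ps - 1 \<or> r = length ps - 1" "length ps - 1 < length ps"
    using r(1) by linarith+
  with r last is_inc_nth_less[OF assms(1), of r "length ps - 1"]
    is_inc_nth_mono[OF assms(1), of r "length ps - 1"]
  show ?thesis by auto
qed

lemma is_inc_snoc:
  assumes "is_inc xs ps" "compatible xs (last ps) i" "i < length xs"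
  shows "is_inc xs (ps @ [i])"
proof -
  have "p < i \<and> xs ! p \<le> xs ! i" if "p \<in> set ps" for p
    using is_inc_le_last[OF assms(1) that] assms(2) by (auto simp: compatible_def)
  with assms(1,3) show ?thesis
    by (auto simp: is_inc_def sorted_wrt_append sorted_append)
qed

lemma finite_RL_lengths: "finite {length ps | ps. is_inc xs ps \<and> ps \<noteq> [] \<and> last ps = i}"
  by (rule finite_subset[of _ "{..length xs}"]) (auto dest: is_inc_length_le)

lemma length_le_RL: "is_inc xs ps \<Longrightarrow> ps \<noteq> [] \<Longrightarrow> length ps \<le> RL xs (last ps)"
  unfolding RL_def by (rule Max_ge[OF finite_RL_lengths]) auto

lemma RL_witness:
  assumes "i < length xs"
  obtains ps where "is_inc xs ps" "ps \<noteq> []" "last ps = i" "length ps = RL xs i"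
proof -
  have "is_inc xs [i]"
    using assms by (rule is_inc_singleton)
  then have "RL xs i \<in> {length ps | ps. is_inc xs ps \<and> ps \<noteq> [] \<and> last ps = i}"
    unfolding RL_def by (intro Max_in[OF finite_RL_lengths]) fastforce
  with that show ?thesis by auto
qed

lemma RL_pos: "i < length xs \<Longrightarrow> 0 < RL xs i"
  using length_le_RL[of xs "[i]"] is_inc_singleton by fastforce

lemma RL_less_if_compatible:
  assumes "compatible xs j i" "i < length xs"
  shows "RL xs j < RL xs i"
proof -
  obtain ps where ps: "is_inc xs ps" "ps \<noteq> []" "last ps = j" "length ps = RL xs j"
    using RL_witness[of j xs] assms by (auto simp: compatible_def)
  have "is_inc xs (ps @ [i])"
    using is_inc_snoc[OF ps(1)] ps(3) assms by simp
  from length_le_RL[OF this] ps(4) show ?thesis by simp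
qed

lemma RL_nth_add:
  assumes "is_inc xs ps" "r + d < length ps"
  shows "RL xs (ps ! r) + d \<le> RL xs (ps ! (r + d))"
  using assms(2)
proof (induction d)
  case 0
  show ?case by simp
next
  case (Suc d)
  have "compatible xs (ps ! (r + d)) (ps ! (r + Suc d))"
    using is_inc_nth_less[OF assms(1)] is_inc_nth_mono[OF assms(1)] Suc.prems
    by (simp add: compatible_def)
  then have "RL xs (ps ! (r + d)) < RL xs (ps ! (r + Suc d))"
    using RL_less_if_compatible is_inc_nth_bound[OF assms(1) Suc.prems] by blast
  with Suc show ?case by simp
qed

lemma pred_exists:
  assumes "i < length xs" "2 \<le> RL xs i"
  shows "\<exists>j. pred xs j i"
proof -
  obtain ps where ps: "is_inc xs ps" "ps \<noteq> []" "last ps = i" "length ps = RL xs i"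
    using RL_witness[OF assms(1)] .
  define n where "n = length ps - 1"
  have n: "0 < n" "n < length ps" "ps ! n = i"
    using assms(2) ps by (auto simp: n_def last_conv_nth)
  have "compatible xs (ps ! (n - 1)) i"
    using is_inc_nth_less[OF ps(1), of "n - 1" n] is_inc_nth_mono[OF ps(1), of "n - 1" n] n
    by (simp add: compatible_def)
  moreover have "n \<le> RL xs (ps ! (n - 1))"
    using length_le_RL[OF is_inc_take[OF ps(1), of n]] n ps(2) by (simp add: last_conv_nth min_def)
  ultimately show ?thesis
    using RL_less_if_compatible[OF _ assms(1)] ps(4) n_def by (force simp: pred_def)
qed

section \<open>Horizontal lists\<close>

lemma HL_0: "HL xs 0 = {}"
  using RL_pos by (fastforce simp: HL_def)

lemma finite_HL: "finite (HL xs t)"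
  by (simp add: HL_def)

lemma RL_eq_if_in_HL: "i \<in> HL xs t \<Longrightarrow> RL xs i = t"
  by (simp add: HL_def)

lemma pos_if_in_HL: "i \<in> HL xs t \<Longrightarrow> 0 < t"
  using HL_0 by (cases t) auto

lemma HL_strict_antimono:
  "x \<in> HL xs t \<Longrightarrow> y \<in> HL xs t \<Longrightarrow> y < x \<Longrightarrow> xs ! x < xs ! y"
  using RL_less_if_compatible[of xs y x] by (force simp: HL_def compatible_def)

lemma HL_antimono:
  "x \<in> HL xs t \<Longrightarrow> y \<in> HL xs t \<Longrightarrow> y \<le> x \<Longrightarrow> xs ! x \<le> xs ! y"
  using HL_strict_antimono[of x xs t y] by (cases "y = x") auto

lemma pred_in_HL: "x \<in> HL xs t \<Longrightarrow> pred xs j x \<Longrightarrow> j \<in> HL xs (t - 1)"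
  by (auto simp: HL_def pred_def compatible_def)

lemma is_inc_nth_in_HL:
  assumes ps: "is_inc xs ps" "last ps \<in> HL xs (length ps)" and r: "r < length ps"
  shows "ps ! r \<in> HL xs (Suc r)"
proof -
  have "ps \<noteq> []"
    using r by auto
  then have last: "last ps = ps ! (r + (length ps - 1 - r))"
    using r by (simp add: last_conv_nth)
  have "Suc r \<le> RL xs (ps ! r)"
    using length_le_RL[OF is_inc_take[OF ps(1), of "Suc r"]] r
    by (simp add: take_Suc_conv_app_nth)
  moreover have "RL xs (ps ! r) + (length ps - 1 - r) \<le> length ps"
    using RL_nth_add[OF ps(1), of r "length ps - 1 - r"] r ps(2) last by (simp add: HL_def)
  ultimately show ?thesis
    using is_inc_nth_bound[OF ps(1) r] r by (simp add: HL_def)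
qed

lemma is_inc_nth_from_end_in_HL:
  assumes "i \<in> HL xs t" "is_inc xs ps" "length ps = t" "last ps = i" "k < t"
  shows "ps ! (t - 1 - k) \<in> HL xs (t - k)"
proof -
  have "Suc (t - 1 - k) = t - k"
    using assms(5) by simp
  with is_inc_nth_in_HL[OF assms(2), of "t - 1 - k"] assms show ?thesis
    by simp
qed

section \<open>Leftmost child and up neighbour\<close>

lemma lm_le: "pred xs j x \<Longrightarrow> lm xs x \<le> j"
  unfolding lm_def by (rule Least_le)

lemma lm_pred: "x \<in> HL xs t \<Longrightarrow> 2 \<le> t \<Longrightarrow> pred xs (lm xs x) x"
  unfolding lm_def HL_def by (rule LeastI_ex, rule pred_exists) auto

lemma un_ge: "j < x \<Longrightarrow> RL xs j = RL xs x - 1 \<Longrightarrow> j \<le> un xs x"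
  unfolding un_def by (rule Greatest_le_nat[where b = x]) auto

lemma un_pred:
  assumes "x \<in> HL xs t" "2 \<le> t"
  shows "pred xs (un xs x) x"
proof -
  obtain j where j: "pred xs j x"
    using pred_exists assms unfolding HL_def by blast
  then have "j < x" and j_RL: "RL xs j = RL xs x - 1"
    by (simp_all add: pred_def compatible_def)
  have un: "un xs x < x \<and> RL xs (un xs x) = RL xs x - 1"
    unfolding un_def
    by (rule GreatestI_nat[where k = j and b = x]) (use \<open>j < x\<close> j_RL in simp_all)
  have "j \<le> un xs x"
    using \<open>j < x\<close> j_RL by (rule un_ge)
  moreover have "j \<in> HL xs (t - 1)" "un xs x \<in> HL xs (t - 1)"
    using pred_in_HL[OF assms(1) j] un assms(1) by (auto simp: HL_def)
  ultimately have "xs ! un xs x \<le> xs ! j"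
    using HL_antimono by blast
  with j un show ?thesis
    by (auto simp: pred_def compatible_def)
qed

lemma lm_in_HL: "x \<in> HL xs t \<Longrightarrow> 2 \<le> t \<Longrightarrow> lm xs x \<in> HL xs (t - 1)"
  using pred_in_HL lm_pred by blast

lemma un_in_HL: "x \<in> HL xs t \<Longrightarrow> 2 \<le> t \<Longrightarrow> un xs x \<in> HL xs (t - 1)"
  using pred_in_HL un_pred by blast

lemma lm_mono:
  assumes x: "x \<in> HL xs t" and y: "y \<in> HL xs t" and "2 \<le> t" "xs ! x \<le> xs ! y"
  shows "xs ! lm xs x \<le> xs ! lm xs y"
proof -
  have px: "pred xs (lm xs x) x" and py: "pred xs (lm xs y) y"
    using lm_pred assms by blast+
  have "lm xs y \<le> lm xs x"
  proof (cases "lm xs x < y")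
    case True
    with px assms(4) have "pred xs (lm xs x) y"
      using x y by (auto simp: pred_def compatible_def HL_def)
    then show ?thesis by (rule lm_le)
  next
    case False
    with py show ?thesis by (auto simp: pred_def compatible_def)
  qed
  then show ?thesis
    using HL_antimono lm_in_HL assms(1-3) by blast
qed

lemma un_mono:
  assumes x: "x \<in> HL xs t" and y: "y \<in> HL xs t" and "2 \<le> t" "xs ! x \<le> xs ! y"
  shows "xs ! un xs x \<le> xs ! un xs y"
proof -
  have "y \<le> x"
    using HL_strict_antimono[OF y x] assms(4) by (meson leD leI)
  with un_pred[OF y] x y assms(3) have "un xs y \<le> un xs x"
    by (intro un_ge) (auto simp: pred_def compatible_def HL_def)
  then show ?thesis
    using HL_antimono un_in_HL assms(1-3) by blast
qed

lemma pred_le_lm: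
  assumes q: "q \<in> HL xs t" and x: "x \<in> HL xs t" and t: "2 \<le> t"
    and "xs ! q \<le> xs ! x" and p: "pred xs p q"
  shows "xs ! p \<le> xs ! lm xs x"
proof -
  have "xs ! p \<le> xs ! lm xs q"
    using HL_antimono[OF pred_in_HL[OF q p] lm_in_HL[OF q t] lm_le[OF p]] .
  also have "\<dots> \<le> xs ! lm xs x"
    using lm_mono[OF q x t] assms(4) .
  finally show ?thesis .
qed

lemma un_le_pred:
  assumes q: "q \<in> HL xs t" and x: "x \<in> HL xs t" and t: "2 \<le> t"
    and "xs ! x \<le> xs ! q" and p: "pred xs p q"
  shows "xs ! un xs x \<le> xs ! p"
proof -
  have "p \<le> un xs q"
    using p q by (intro un_ge) (auto simp: pred_def compatible_def HL_def)
  have "xs ! un xs x \<le> xs ! un xs q"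
    using un_mono[OF x q t] assms(4) .
  also have "\<dots> \<le> xs ! p"
    using HL_antimono[OF un_in_HL[OF q t] pred_in_HL[OF q p] \<open>p \<le> un xs q\<close>] .
  finally show ?thesis .
qed

section \<open>Iterated descent along the horizontal lists\<close>

lemma funpow_in_HL:
  assumes step: "\<And>x t. x \<in> HL xs t \<Longrightarrow> 2 \<le> t \<Longrightarrow> pred xs (f x) x"
    and "x \<in> HL xs t" "k < t"
  shows "(f ^^ k) x \<in> HL xs (t - k)"
  using assms(3)
proof (induction k)
  case 0
  with assms(2) show ?case by simp
next
  case (Suc k)
  then have IH: "(f ^^ k) x \<in> HL xs (t - k)" and "2 \<le> t - k"
    by simp_all
  from pred_in_HL[OF IH step[OF this]] show ?case
    by simp
qed

lemma funpow_mono_HL: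
  assumes step: "\<And>x t. x \<in> HL xs t \<Longrightarrow> 2 \<le> t \<Longrightarrow> pred xs (f x) x"
    and mono: "\<And>x y t. x \<in> HL xs t \<Longrightarrow> y \<in> HL xs t \<Longrightarrow> 2 \<le> t \<Longrightarrow>
      xs ! x \<le> xs ! y \<Longrightarrow> xs ! f x \<le> xs ! f y"
    and x: "x \<in> HL xs t" and y: "y \<in> HL xs t" and "xs ! x \<le> xs ! y" "k < t"
  shows "xs ! (f ^^ k) x \<le> xs ! (f ^^ k) y"
  using assms(6)
proof (induction k)
  case 0
  with assms(5) show ?case by simp
next
  case (Suc k)
  then have "k < t" "2 \<le> t - k"
    by simp_all
  from mono[OF funpow_in_HL[OF step x \<open>k < t\<close>] funpow_in_HL[OF step y \<open>k < t\<close>]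
      \<open>2 \<le> t - k\<close> Suc.IH[OF \<open>k < t\<close>]]
  show ?case by simp
qed

lemma funpow_lm_in_HL: "x \<in> HL xs t \<Longrightarrow> k < t \<Longrightarrow> (lm xs ^^ k) x \<in> HL xs (t - k)"
  using lm_pred by (rule funpow_in_HL)

lemma funpow_un_in_HL: "x \<in> HL xs t \<Longrightarrow> k < t \<Longrightarrow> (un xs ^^ k) x \<in> HL xs (t - k)"
  using un_pred by (rule funpow_in_HL)

lemma funpow_lm_mono:
  "x \<in> HL xs t \<Longrightarrow> y \<in> HL xs t \<Longrightarrow> xs ! x \<le> xs ! y \<Longrightarrow> k < t \<Longrightarrow>
    xs ! (lm xs ^^ k) x \<le> xs ! (lm xs ^^ k) y"
  using lm_pred lm_mono by (rule funpow_mono_HL)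

lemma funpow_un_mono:
  "x \<in> HL xs t \<Longrightarrow> y \<in> HL xs t \<Longrightarrow> xs ! x \<le> xs ! y \<Longrightarrow> k < t \<Longrightarrow>
    xs ! (un xs ^^ k) x \<le> xs ! (un xs ^^ k) y"
  using un_pred un_mono by (rule funpow_mono_HL)

lemma is_inc_rel_funpow:
  assumes step: "\<And>x t. x \<in> HL xs t \<Longrightarrow> 2 \<le> t \<Longrightarrow> pred xs (f x) x"
    and dom: "\<And>q x p t. q \<in> HL xs t \<Longrightarrow> x \<in> HL xs t \<Longrightarrow> 2 \<le> t \<Longrightarrow>
      R (xs ! q) (xs ! x) \<Longrightarrow> pred xs p q \<Longrightarrow> R (xs ! p) (xs ! f x)"
    and refl: "\<And>a. R a a"
    and i: "i \<in> HL xs t" and ps: "is_inc xs ps" "length ps = t" "last ps = i" and "k < t"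
  shows "R (xs ! (ps ! (t - 1 - k))) (xs ! (f ^^ k) i)"
  using \<open>k < t\<close>
proof (induction k)
  case 0
  then have "ps \<noteq> []"
    using ps(2) by auto
  with ps(2,3) have "ps ! (t - 1) = i"
    by (simp add: last_conv_nth)
  with refl show ?case by simp
next
  case (Suc k)
  define q where "q = ps ! (t - 1 - k)"
  define p where "p = ps ! (t - 1 - Suc k)"
  have q: "q \<in> HL xs (t - k)" and p: "p \<in> HL xs (t - Suc k)"
    unfolding q_def p_def using is_inc_nth_from_end_in_HL[OF i ps] Suc.prems by simp_all
  have idx: "t - 1 - k = Suc (t - 1 - Suc k)" "t - 1 - k < length ps"
    using Suc.prems ps(2) by simp_all
  have "pred xs p q"
    using is_inc_nth_less[OF ps(1)] is_inc_nth_mono[OF ps(1)] idx p q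
    by (simp add: p_def q_def pred_def compatible_def HL_def)
  moreover have "(f ^^ k) i \<in> HL xs (t - k)" "2 \<le> t - k"
    using funpow_in_HL[OF step i] Suc.prems by simp_all
  moreover have "R (xs ! q) (xs ! (f ^^ k) i)"
    using Suc.IH Suc.prems unfolding q_def by simp
  ultimately have "R (xs ! p) (xs ! f ((f ^^ k) i))"
    using dom[OF q] by blast
  then show ?case
    unfolding p_def by simp
qed

lemma is_inc_le_funpow_lm:
  "i \<in> HL xs t \<Longrightarrow> is_inc xs ps \<Longrightarrow> length ps = t \<Longrightarrow> last ps = i \<Longrightarrow> k < t \<Longrightarrow>
    xs ! (ps ! (t - 1 - k)) \<le> xs ! (lm xs ^^ k) i"
  using lm_pred pred_le_lm order_refl by (rule is_inc_rel_funpow)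

lemma funpow_un_le_is_inc:
  "i \<in> HL xs t \<Longrightarrow> is_inc xs ps \<Longrightarrow> length ps = t \<Longrightarrow> last ps = i \<Longrightarrow> k < t \<Longrightarrow>
    xs ! (un xs ^^ k) i \<le> xs ! (ps ! (t - 1 - k))"
  using un_pred un_le_pred order_refl by (rule is_inc_rel_funpow[where R = "\<lambda>a b. b \<le> a"])

section \<open>The chains and their weights\<close>

lemma length_chain [simp]: "length (chain f n i) = n"
  by (simp add: chain_def)

lemma chain_eq_Nil_iff [simp]: "chain f n i = [] \<longleftrightarrow> n = 0"
  by (simp add: chain_def)

lemma nth_chain: "r < n \<Longrightarrow> chain f n i ! r = (f ^^ (n - 1 - r)) i"
  by (simp add: chain_def)

lemma chain_Suc: "chain f (Suc n) i = chain f n (f i) @ [i]"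
proof -
  have "(f ^^ (n - k)) i = (f ^^ (n - 1 - k)) (f i)" if "k < n" for k
  proof -
    have "n - k = Suc (n - 1 - k)"
      using that by simp
    then show ?thesis
      by (simp only: funpow_Suc_right comp_apply)
  qed
  then show ?thesis
    by (simp add: chain_def)
qed

lemma last_chain: "0 < n \<Longrightarrow> last (chain f n i) = i"
  by (cases n) (simp_all add: chain_Suc)

lemma chain_is_inc:
  assumes step: "\<And>x t. x \<in> HL xs t \<Longrightarrow> 2 \<le> t \<Longrightarrow> pred xs (f x) x"
  shows "x \<in> HL xs t \<Longrightarrow> is_inc xs (chain f t x)"
proof (induction t arbitrary: x)
  case 0
  then show ?case by (simp add: HL_0)
next
  case (Suc n)
  show ?case
  proof (cases n)
    case 0
    with Suc.prems show ?thesis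
      by (simp add: chain_def HL_def is_inc_singleton)
  next
    case (Suc n')
    then have "pred xs (f x) x"
      using step Suc.prems by simp
    then have "f x \<in> HL xs n" "compatible xs (f x) x"
      using pred_in_HL[OF Suc.prems] by (simp_all add: pred_def)
    then have "is_inc xs (chain f n (f x) @ [x])"
      using Suc.IH \<open>n = Suc n'\<close> Suc.prems
      by (intro is_inc_snoc) (simp_all add: last_chain HL_def)
    then show ?thesis
      by (simp only: chain_Suc)
  qed
qed

lemma weight_mono:
  "length ps = length qs \<Longrightarrow> (\<And>r. r < length ps \<Longrightarrow> xs ! (ps ! r) \<le> xs ! (qs ! r)) \<Longrightarrow>
    weight xs ps \<le> weight xs qs"
  unfolding weight_def sum_list_sum_nth by (auto intro: sum_mono)

lemma gap_conv_nth: "ps \<noteq> [] \<Longrightarrow> gap xs ps = xs ! last ps - xs ! (ps ! 0)"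
  by (simp add: gap_def hd_conv_nth)

lemma is_inc_le_chain_lm:
  assumes "i \<in> HL xs t" "is_inc xs ps" "length ps = t" "last ps = i" "r < t"
  shows "xs ! (ps ! r) \<le> xs ! (chain (lm xs) t i ! r)"
  using is_inc_le_funpow_lm[OF assms(1-4), of "t - 1 - r"] assms(5) by (simp add: nth_chain)

lemma chain_un_le_is_inc:
  assumes "i \<in> HL xs t" "is_inc xs ps" "length ps = t" "last ps = i" "r < t"
  shows "xs ! (chain (un xs) t i ! r) \<le> xs ! (ps ! r)"
  using funpow_un_le_is_inc[OF assms(1-4), of "t - 1 - r"] assms(5) by (simp add: nth_chain)

lemma weight_le_chain_lm:
  "i \<in> HL xs t \<Longrightarrow> is_inc xs ps \<Longrightarrow> length ps = t \<Longrightarrow> last ps = i \<Longrightarrow>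
    weight xs ps \<le> weight xs (chain (lm xs) t i)"
  by (rule weight_mono) (simp_all add: is_inc_le_chain_lm)

lemma weight_chain_un_le:
  "i \<in> HL xs t \<Longrightarrow> is_inc xs ps \<Longrightarrow> length ps = t \<Longrightarrow> last ps = i \<Longrightarrow>
    weight xs (chain (un xs) t i) \<le> weight xs ps"
  by (rule weight_mono) (simp_all add: chain_un_le_is_inc)

lemma gap_chain_lm_le:
  assumes "i \<in> HL xs t" "is_inc xs ps" "length ps = t" "last ps = i"
  shows "gap xs (chain (lm xs) t i) \<le> gap xs ps"
proof -
  have "0 < t"
    using pos_if_in_HL[OF assms(1)] .
  with assms is_inc_le_chain_lm[OF assms, of 0] show ?thesis
    by (auto simp: gap_conv_nth last_chain)
qed

lemma gap_le_chain_un: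
  assumes "i \<in> HL xs t" "is_inc xs ps" "length ps = t" "last ps = i"
  shows "gap xs ps \<le> gap xs (chain (un xs) t i)"
proof -
  have "0 < t"
    using pos_if_in_HL[OF assms(1)] .
  with assms chain_un_le_is_inc[OF assms, of 0] show ?thesis
    by (auto simp: gap_conv_nth last_chain)
qed

lemma weight_chain_mono:
  assumes step: "\<And>x t. x \<in> HL xs t \<Longrightarrow> 2 \<le> t \<Longrightarrow> pred xs (f x) x"
    and mono: "\<And>x y t. x \<in> HL xs t \<Longrightarrow> y \<in> HL xs t \<Longrightarrow> 2 \<le> t \<Longrightarrow>
      xs ! x \<le> xs ! y \<Longrightarrow> xs ! f x \<le> xs ! f y"
    and "x \<in> HL xs t" "y \<in> HL xs t" "xs ! x \<le> xs ! y"
  shows "weight xs (chain f t x) \<le> weight xs (chain f t y)"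
  using funpow_mono_HL[OF step mono assms(3-5)] by (intro weight_mono) (simp_all add: nth_chain)

section \<open>Longest increasing subsequences\<close>

lemma nonempty_HL_eq:
  assumes "xs \<noteq> []"
  shows "{t. HL xs t \<noteq> {}} = {1..Max (RL xs ` {..<length xs})}"
proof -
  define M where "M = Max (RL xs ` {..<length xs})"
  have RL_le: "RL xs j \<le> M" if "j < length xs" for j
    unfolding M_def using that by simp
  have "M \<in> RL xs ` {..<length xs}"
    unfolding M_def using assms by (intro Max_in) auto
  then obtain e where e: "e < length xs" "RL xs e = M"
    by auto
  obtain ps where ps: "is_inc xs ps" "ps \<noteq> []" "last ps = e" "length ps = M"
    using RL_witness[OF e(1)] e(2) by metis
  have "HL xs t \<noteq> {}" if "t \<in> {1..M}" for t
  proof -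
    have "t - 1 < length ps" "last ps \<in> HL xs (length ps)"
      using that ps(3,4) e by (auto simp: HL_def)
    then have "ps ! (t - 1) \<in> HL xs (Suc (t - 1))"
      using is_inc_nth_in_HL[OF ps(1)] by blast
    then show ?thesis
      using that by auto
  qed
  moreover have "t \<in> {1..M}" if "HL xs t \<noteq> {}" for t
    using that RL_pos RL_le by (fastforce simp: HL_def)
  ultimately show ?thesis
    unfolding M_def[symmetric] by blast
qed

lemma num_lists_eq_Max_RL: "xs \<noteq> [] \<Longrightarrow> num_lists xs = Max (RL xs ` {..<length xs})"
  by (simp add: num_lists_def nonempty_HL_eq)

lemma RL_le_num_lists: "i < length xs \<Longrightarrow> RL xs i \<le> num_lists xs"
  using num_lists_eq_Max_RL[of xs] by (cases "xs = []") simp_all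

lemma HL_num_lists_nonempty:
  assumes "xs \<noteq> []"
  shows "HL xs (num_lists xs) \<noteq> {}"
proof -
  have "1 \<le> num_lists xs"
    using RL_pos[of 0 xs] RL_le_num_lists[of 0 xs] assms by simp
  then show ?thesis
    using nonempty_HL_eq[OF assms] num_lists_eq_Max_RL[OF assms] by auto
qed

lemma is_inc_length_le_num_lists: "is_inc xs ps \<Longrightarrow> length ps \<le> num_lists xs"
  using length_le_RL[of xs ps] RL_le_num_lists[OF is_inc_last_bound, of xs ps]
  by (cases "ps = []") simp_all

lemma is_lis_iff:
  assumes "xs \<noteq> []"
  shows "is_lis xs ps \<longleftrightarrow> is_inc xs ps \<and> length ps = num_lists xs"
proof -
  obtain i where "i \<in> HL xs (num_lists xs)"
    using HL_num_lists_nonempty[OF assms] by blast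
  then obtain qs where "is_inc xs qs" "length qs = num_lists xs"
    using RL_witness[of i xs] by (auto simp: HL_def)
  then show ?thesis
    using is_inc_length_le_num_lists by (force simp: is_lis_def)
qed

lemma last_is_lis_in_HL:
  assumes "xs \<noteq> []" "is_lis xs ps"
  shows "last ps \<in> HL xs (length ps)"
proof -
  have ps: "is_inc xs ps" "length ps = num_lists xs"
    using assms is_lis_iff by blast+
  moreover have "ps \<noteq> []"
    using HL_num_lists_nonempty[OF assms(1)] ps(2) by (auto simp: HL_0)
  ultimately show ?thesis
    using length_le_RL[of xs ps] RL_le_num_lists[OF is_inc_last_bound, of xs ps]
    by (simp add: HL_def is_inc_last_bound)
qed

lemma is_lis_chain:
  assumes step: "\<And>x t. x \<in> HL xs t \<Longrightarrow> 2 \<le> t \<Longrightarrow> pred xs (f x) x"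
    and "x \<in> HL xs (num_lists xs)"
  shows "is_lis xs (chain f (num_lists xs) x)"
proof -
  have "is_inc xs (chain f (num_lists xs) x)"
    using step assms(2) by (rule chain_is_inc)
  moreover have "xs \<noteq> []"
    using assms(2) by (auto simp: HL_def)
  ultimately show ?thesis
    by (simp add: is_lis_iff)
qed

lemma weight_is_lis_le_chain_lm_Min:
  assumes "xs \<noteq> []" "is_lis xs ps"
  shows "weight xs ps \<le> weight xs (chain (lm xs) (num_lists xs) (Min (HL xs (num_lists xs))))"
proof -
  let ?m = "num_lists xs" and ?a = "Min (HL xs (num_lists xs))"
  have fin: "finite (HL xs ?m)"
    by (rule finite_HL)
  have ps: "is_inc xs ps" "length ps = ?m"
    using assms by (simp_all add: is_lis_iff)
  have e: "last ps \<in> HL xs ?m"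
    using last_is_lis_in_HL[OF assms] ps(2) by simp
  have a: "?a \<in> HL xs ?m"
    using Min_in[OF fin HL_num_lists_nonempty[OF assms(1)]] .
  have "xs ! last ps \<le> xs ! ?a"
    using HL_antimono[OF e a Min_le[OF fin e]] .
  have "weight xs ps \<le> weight xs (chain (lm xs) ?m (last ps))"
    using weight_le_chain_lm[OF e ps] by simp
  also have "\<dots> \<le> weight xs (chain (lm xs) ?m ?a)"
    using lm_pred lm_mono e a \<open>xs ! last ps \<le> xs ! ?a\<close> by (rule weight_chain_mono)
  finally show ?thesis .
qed

lemma weight_chain_un_Max_le_is_lis:
  assumes "xs \<noteq> []" "is_lis xs ps"
  shows "weight xs (chain (un xs) (num_lists xs) (Max (HL xs (num_lists xs)))) \<le> weight xs ps"
proof -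
  let ?m = "num_lists xs" and ?b = "Max (HL xs (num_lists xs))"
  have fin: "finite (HL xs ?m)"
    by (rule finite_HL)
  have ps: "is_inc xs ps" "length ps = ?m"
    using assms by (simp_all add: is_lis_iff)
  have e: "last ps \<in> HL xs ?m"
    using last_is_lis_in_HL[OF assms] ps(2) by simp
  have b: "?b \<in> HL xs ?m"
    using Max_in[OF fin HL_num_lists_nonempty[OF assms(1)]] .
  have "xs ! ?b \<le> xs ! last ps"
    using HL_antimono[OF b e Max_ge[OF fin e]] .
  have "weight xs (chain (un xs) ?m ?b) \<le> weight xs (chain (un xs) ?m (last ps))"
    using un_pred un_mono b e \<open>xs ! ?b \<le> xs ! last ps\<close> by (rule weight_chain_mono)
  also have "\<dots> \<le> weight xs ps"
    using weight_chain_un_le[OF e ps] by simp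
  finally show ?thesis .
qed

theorem theorem6:
  fixes xs :: "real list" and m :: nat
  assumes m_def: "m = num_lists xs"
  shows
   "(\<forall>t i j. i \<in> HL xs t \<and> j \<in> HL xs t \<and> xs ! i < xs ! j \<longrightarrow>
       (\<forall>k. 1 \<le> k \<and> k < t \<longrightarrow>
          (lm xs ^^ k) i \<in> HL xs (t - k) \<and> (lm xs ^^ k) j \<in> HL xs (t - k) \<and>
          (un xs ^^ k) i \<in> HL xs (t - k) \<and> (un xs ^^ k) j \<in> HL xs (t - k) \<and>
          xs ! ((lm xs ^^ k) i) \<le> xs ! ((lm xs ^^ k) j) \<and>
          xs ! ((un xs ^^ k) i) \<le> xs ! ((un xs ^^ k) j)))
  \<and> (\<forall>t i ps. i \<in> HL xs t \<and> is_inc xs ps \<and> length ps = t \<and> ps \<noteq> [] \<and> last ps = i \<longrightarrow>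
       (\<forall>k. k \<le> t - 1 \<longrightarrow>
          (lm xs ^^ k) i \<in> HL xs (t - k) \<and> ps ! (t - 1 - k) \<in> HL xs (t - k) \<and>
          (un xs ^^ k) i \<in> HL xs (t - k) \<and>
          xs ! ((lm xs ^^ k) i) \<ge> xs ! (ps ! (t - 1 - k)) \<and>
          xs ! (ps ! (t - 1 - k)) \<ge> xs ! ((un xs ^^ k) i)))
  \<and> (\<forall>i. i \<in> HL xs m \<longrightarrow>
       (let L = chain (lm xs) m i; U = chain (un xs) m i in
        is_inc xs L \<and> length L = RL xs i \<and> L \<noteq> [] \<and> last L = i \<and>
        is_inc xs U \<and> length U = RL xs i \<and> U \<noteq> [] \<and> last U = i \<and>
        (\<forall>ps. is_inc xs ps \<and> ps \<noteq> [] \<and> last ps = i \<and> length ps = RL xs i \<longrightarrow>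
           weight xs ps \<le> weight xs L \<and> gap xs L \<le> gap xs ps \<and>
           weight xs U \<le> weight xs ps \<and> gap xs ps \<le> gap xs U)))
  \<and> (xs \<noteq> [] \<longrightarrow>
       (let L = chain (lm xs) m (Min (HL xs m)); U = chain (un xs) m (Max (HL xs m)) in
        is_lis xs L \<and> is_lis xs U \<and>
        (\<forall>ps. is_lis xs ps \<longrightarrow> weight xs ps \<le> weight xs L \<and> weight xs U \<le> weight xs ps)))"
  unfolding Let_def m_def
  apply (intro conjI)
  subgoal
    by (auto intro: funpow_lm_in_HL funpow_un_in_HL funpow_lm_mono funpow_un_mono less_imp_le)
  subgoal
    apply (intro allI impI; elim conjE)
    subgoal for t i ps k
      using funpow_lm_in_HL[of i xs t k] funpow_un_in_HL[of i xs t k]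
        is_inc_nth_from_end_in_HL[of i xs t ps k] is_inc_le_funpow_lm[of i xs t ps k]
        funpow_un_le_is_inc[of i xs t ps k]
      by (cases ps) auto
    done
  subgoal
    apply (intro allI impI)
    subgoal for i
      using chain_is_inc[of xs "lm xs" i] chain_is_inc[of xs "un xs" i] lm_pred un_pred
        pos_if_in_HL[of i xs] RL_eq_if_in_HL[of i xs]
        weight_le_chain_lm gap_chain_lm_le weight_chain_un_le gap_le_chain_un
      by (auto simp: last_chain)
    done
  subgoal
    using is_lis_chain[of xs "lm xs"] is_lis_chain[of xs "un xs"] lm_pred un_pred
      Min_in[OF finite_HL HL_num_lists_nonempty] Max_in[OF finite_HL HL_num_lists_nonempty]
      weight_is_lis_le_chain_lm_Min weight_chain_un_Max_le_is_lis
    by auto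
  done

end
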